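(* Under the standing AoI model, let $v\ge0$ and $T_v=(v-T_{\rm tx})^+$. Then the peak-AoI violation probability is $$P_{p^v}=\mathbb{P}[\Delta_{p,k}\ge v]=1-\frac{\beta^{2\alpha}}{\Gamma(\alpha)^2}\sum_{n=0}^\infty\sum_{k=0}^\infty\frac{T_v^{2\alpha+n+k}}{n!\,k!\,(\alpha+n)}B(\alpha+n+1,\alpha+k)\Big\{(-\beta)^{n+k}-e^{-\rho T_v}(\rho-\beta)^{n+k}\Big\}.$$
   Context: Standing AoI model. Fix $\alpha>0$, $\beta>0$, $\rho>0$ and a constant $T_{\rm tx}\ge0$. Let $(X_k)_{k\ge0}$ be i.i.d. Gamma$(\alpha,\beta)$ random variables with density $f(x)=\frac{\beta^\alpha}{\Gamma(\alpha)}x^{\alpha-1}e^{-\beta x}$ for $x>0$. Let $(T_{{\rm int},k})_{k\ge1}$ be i.i.d. exponential random variables with rate $\rho$, independent of $(X_k)$. The peak AoI is $\Delta_{p,k}=X_{k-1}+X_k+T_{{\rm int},k}+T_{\rm tx}$ for $k\ge1$. $B(a,b)$ denotes the Beta function and $(y)^+=\max(0,y)$. *)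

theory Defs
  imports "HOL-Probability.Probability"
begin

definition gamma_density :: "real \<Rightarrow> real \<Rightarrow> real \<Rightarrow> real" where
  "gamma_density a b x =
     (if x > 0 then b powr a / Gamma a * x powr (a - 1) * exp (- b * x) else 0)"

end

theory Submission
  imports Defs
begin

(* Given X_{k-1} = x and X_k = y, the peak age stays below v iff T_int < c - x - y with
   c = v - T_tx, which has probability 1 - exp (-rho (c - x - y)) on x + y < c.  Absorbing
   exp (-rho (c - x - y)) into the Gamma densities writes P[peak age < v] as a difference of
   J(gamma) = int int_{x, y > 0, x + y < c} (x y)^(alpha - 1) exp (gamma (x + y)) at
   gamma = -beta and gamma = rho - beta.  Expanding exp (gamma y) termwise turns the inner
   integral into a series in (c - x)^(alpha + n); expanding exp (gamma x) reduces what is left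
   to Beta integrals c^(2 alpha + n + m) B(alpha + n + 1, alpha + m).  Both exchanges of sum
   and integral are dominated, since all integrands live on bounded intervals. *)

lemma
  fixes f :: "real \<Rightarrow> real"
  assumes nonneg: "\<And>x. x \<in> S \<Longrightarrow> 0 \<le> f x" and f: "(f has_integral I) S"
    and meas: "(\<lambda>x. indicator S x * f x) \<in> borel_measurable borel"
  shows integrable_indicator_mult_if_has_integral: "integrable lborel (\<lambda>x. indicator S x * f x)"
    and integral_indicator_mult_eq_has_integral: "(\<integral>x. indicator S x * f x \<partial>lborel) = I"
proof -
  have "0 \<le> I" using has_integral_nonneg[OF f] nonneg by auto
  have "(\<integral>\<^sup>+x. indicator S x * f x \<partial>lborel) = ennreal I"
    using nn_integral_has_integral_lebesgue[OF nonneg f] by simp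
  then show "integrable lborel (\<lambda>x. indicator S x * f x)" "(\<integral>x. indicator S x * f x \<partial>lborel) = I"
    using nn_integral_eq_integrable[of "\<lambda>x. indicator S x * f x" lborel I] meas \<open>0 \<le> I\<close> nonneg
    by (simp_all add: indicator_def)
qed

lemma
  fixes p d :: real
  assumes "p > -1" "d \<ge> 0"
  shows integrable_powr_Ioo: "integrable lborel (\<lambda>x. indicator {0<..<d} x * x powr p)"
    and integral_powr_Ioo: "(\<integral>x. indicator {0<..<d} x * x powr p \<partial>lborel) = d powr (p + 1) / (p + 1)"
proof -
  have "((\<lambda>x. x powr p) has_integral d powr (p + 1) / (p + 1)) {0<..<d}"
    using has_integral_powr_from_0[OF assms] by (simp add: has_integral_Icc_iff_Ioo)
  then show "integrable lborel (\<lambda>x. indicator {0<..<d} x * x powr p)"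
    "(\<integral>x. indicator {0<..<d} x * x powr p \<partial>lborel) = d powr (p + 1) / (p + 1)"
    by (auto intro: integrable_indicator_mult_if_has_integral integral_indicator_mult_eq_has_integral)
qed

lemma
  fixes p q c :: real
  assumes p: "p > -1" and q: "q > -1" and c: "c > 0"
  shows integrable_Beta_kernel_Ioo:
      "integrable lborel (\<lambda>x. indicator {0<..<c} x * (x powr p * (c - x) powr q))"
    and integral_Beta_kernel_Ioo:
      "(\<integral>x. indicator {0<..<c} x * (x powr p * (c - x) powr q) \<partial>lborel)
         = c powr (p + q + 1) * Beta (p + 1) (q + 1)"
proof -
  define f where "f x = indicator {0<..<c} x * (x powr p * (c - x) powr q)" for x :: real
  define g where "g x = indicator {0<..<1} x * (x powr p * (1 - x) powr q)" for x :: real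
  have "((\<lambda>x. x powr p * (1 - x) powr q) has_integral Beta (p + 1) (q + 1)) {0<..<1}"
    using has_integral_Beta_real[of "p + 1" "q + 1"] p q by (simp add: has_integral_Icc_iff_Ioo)
  then have g: "integrable lborel g" "integral\<^sup>L lborel g = Beta (p + 1) (q + 1)"
    unfolding g_def
    by (auto intro: integrable_indicator_mult_if_has_integral integral_indicator_mult_eq_has_integral)
  have scale: "f (0 + c * x) = c powr (p + q) * g x" for x
  proof (cases "x \<in> {0<..<1}")
    case True
    then have "(c * x) powr p = c powr p * x powr p" "(c - c * x) powr q = c powr q * (1 - x) powr q"
      using c by (simp_all add: powr_mult[symmetric] right_diff_distrib)
    with True c show ?thesis by (simp add: f_def g_def powr_add)
  next
    case False
    then have "c * x \<notin> {0<..<c}"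
      using c by (auto simp: mult_less_cancel_left1 zero_less_mult_iff)
    with False show ?thesis by (simp add: f_def g_def)
  qed
  have "integrable lborel (\<lambda>x. f (0 + c * x))"
    unfolding scale using g by simp
  then show "integrable lborel f"
    using lborel_integrable_real_affine_iff[of c f 0] c by simp
  have "integral\<^sup>L lborel f = c * (\<integral>x. f (0 + c * x) \<partial>lborel)"
    using lborel_integral_real_affine[of c f 0] c by simp
  also have "\<dots> = c powr (p + q + 1) * Beta (p + 1) (q + 1)"
    unfolding scale using c g by (simp add: powr_add)
  finally show "integral\<^sup>L lborel f = c powr (p + q + 1) * Beta (p + 1) (q + 1)" .
qed

lemma
  fixes w \<phi> g :: "real \<Rightarrow> real" and a :: "nat \<Rightarrow> real"
  assumes w: "integrable lborel w" and w_nonneg: "\<And>x. 0 \<le> w x"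
    and \<phi>[measurable]: "\<phi> \<in> borel_measurable borel" and R: "R \<ge> 0"
    and \<phi>_bound: "\<And>x. w x \<noteq> 0 \<Longrightarrow> \<bar>\<phi> x\<bar> \<le> R"
    and a: "summable (\<lambda>n. \<bar>a n\<bar> * R ^ n)"
    and g: "\<And>x. w x \<noteq> 0 \<Longrightarrow> (\<lambda>n. a n * \<phi> x ^ n) sums g x"
  shows integrable_weighted_power_series: "integrable lborel (\<lambda>x. w x * g x)"
    and sums_integral_weighted_power_series:
      "(\<lambda>n. a n * (\<integral>x. w x * \<phi> x ^ n \<partial>lborel)) sums (\<integral>x. w x * g x \<partial>lborel)"
proof -
  define f where "f n x = w x * (a n * \<phi> x ^ n)" for n x
  have [measurable]: "w \<in> borel_measurable borel"
    using borel_measurable_integrable[OF w] by simp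
  have f_bound: "norm (f n x) \<le> \<bar>a n\<bar> * R ^ n * w x" for n x
  proof (cases "w x = 0")
    case False
    then have "\<bar>a n\<bar> * \<bar>\<phi> x\<bar> ^ n \<le> \<bar>a n\<bar> * R ^ n"
      using \<phi>_bound by (intro mult_left_mono power_mono) auto
    then show ?thesis
      using w_nonneg[of x] by (simp add: f_def abs_mult power_abs mult_left_mono mult_ac)
  qed (simp add: f_def)
  have f: "integrable lborel (f n)" for n
  proof (rule Bochner_Integration.integrable_bound)
    show "integrable lborel (\<lambda>x. \<bar>a n\<bar> * R ^ n * w x)" using w by simp
    show "AE x in lborel. norm (f n x) \<le> norm (\<bar>a n\<bar> * R ^ n * w x)"
      using R w_nonneg f_bound by (intro AE_I2) (simp add: abs_mult)
  qed (unfold f_def, measurable)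
  have summable_pointwise: "AE x in lborel. summable (\<lambda>n. norm (f n x))"
  proof (rule AE_I2)
    show "summable (\<lambda>n. norm (f n x))" for x
      by (rule summable_comparison_test[OF _ summable_mult2[OF a, of "w x"]]) (use f_bound in simp)
  qed
  have integral_bound: "(\<integral>x. norm (f n x) \<partial>lborel) \<le> \<bar>a n\<bar> * R ^ n * integral\<^sup>L lborel w" for n
    using integral_mono[OF integrable_norm[OF f] _ f_bound] w by simp
  have summable_integrals: "summable (\<lambda>n. \<integral>x. norm (f n x) \<partial>lborel)"
    by (intro summable_comparison_test[OF _ summable_mult2[OF a]])
       (use integral_bound in \<open>auto simp: integral_nonneg_AE\<close>)
  have sum_f: "(\<Sum>n. f n x) = w x * g x" for x
    using sums_mult[OF g, of x "w x"] by (cases "w x = 0") (simp_all add: f_def sums_iff)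
  have integral_f: "integral\<^sup>L lborel (f n) = a n * (\<integral>x. w x * \<phi> x ^ n \<partial>lborel)" for n
  proof -
    have "f n = (\<lambda>x. a n * (w x * \<phi> x ^ n))" by (auto simp: f_def)
    then show ?thesis by simp
  qed
  show "integrable lborel (\<lambda>x. w x * g x)"
    using integrable_suminf[OF f summable_pointwise summable_integrals] by (simp add: sum_f)
  show "(\<lambda>n. a n * (\<integral>x. w x * \<phi> x ^ n \<partial>lborel)) sums (\<integral>x. w x * g x \<partial>lborel)"
    using sums_integral[OF f summable_pointwise summable_integrals] by (simp add: sum_f integral_f)
qed

lemma exp_mult_sums: "(\<lambda>n. \<gamma> ^ n / fact n * x ^ n) sums exp (\<gamma> * x :: real)"
  using exp_converges[of "\<gamma> * x"] by (simp add: power_mult_distrib divide_inverse mult_ac)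

lemma summable_abs_exp_coeffs: "summable (\<lambda>n. \<bar>\<gamma> ^ n / fact n\<bar> * (R :: real) ^ n)"
  using exp_mult_sums[of "\<bar>\<gamma>\<bar>" R] by (simp add: sums_iff power_abs)

lemma
  fixes w :: "real \<Rightarrow> real"
  assumes w: "integrable lborel w" and w_nonneg: "\<And>x. 0 \<le> w x" and R: "R \<ge> 0"
    and support: "\<And>x. w x \<noteq> 0 \<Longrightarrow> \<bar>x\<bar> \<le> R"
  shows integrable_mult_exp: "integrable lborel (\<lambda>x. w x * exp (\<gamma> * x))"
    and sums_integral_mult_exp:
      "(\<lambda>n. \<gamma> ^ n / fact n * (\<integral>x. w x * x ^ n \<partial>lborel)) sums (\<integral>x. w x * exp (\<gamma> * x) \<partial>lborel)"
  using integrable_weighted_power_series[OF w w_nonneg _ R support summable_abs_exp_coeffs exp_mult_sums]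
    sums_integral_weighted_power_series[OF w w_nonneg _ R support summable_abs_exp_coeffs exp_mult_sums]
  by simp_all

definition tilted_gamma_integral :: "real \<Rightarrow> real \<Rightarrow> real \<Rightarrow> real" where
  "tilted_gamma_integral \<alpha> \<gamma> d =
     (\<integral>x. indicator {0<..<d} x * x powr (\<alpha> - 1) * exp (\<gamma> * x) \<partial>lborel)"

definition tilted_beta_integral :: "real \<Rightarrow> real \<Rightarrow> real \<Rightarrow> nat \<Rightarrow> real" where
  "tilted_beta_integral \<alpha> \<gamma> c n =
     (\<integral>x. indicator {0<..<c} x * x powr (\<alpha> - 1) * (c - x) powr (\<alpha> + n) * exp (\<gamma> * x) \<partial>lborel)"

definition tilted_gamma_convolution :: "real \<Rightarrow> real \<Rightarrow> real \<Rightarrow> real" where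
  "tilted_gamma_convolution \<alpha> \<gamma> c =
     (\<integral>x. indicator {0<..<c} x * x powr (\<alpha> - 1) * exp (\<gamma> * x)
           * tilted_gamma_integral \<alpha> \<gamma> (c - x) \<partial>lborel)"

lemma
  fixes \<alpha> \<gamma> d :: real
  assumes \<alpha>: "\<alpha> > 0" and d: "d \<ge> 0"
  shows integrable_tilted_gamma:
      "integrable lborel (\<lambda>x. indicator {0<..<d} x * x powr (\<alpha> - 1) * exp (\<gamma> * x))"
    and tilted_gamma_integral_sums:
      "(\<lambda>n. \<gamma> ^ n / fact n * (d powr (\<alpha> + n) / (\<alpha> + n))) sums tilted_gamma_integral \<alpha> \<gamma> d"
proof -
  define w where "w = (\<lambda>x. indicator {0<..<d} x * x powr (\<alpha> - 1))"
  have w: "integrable lborel w" "\<And>x. 0 \<le> w x" "\<And>x. w x \<noteq> 0 \<Longrightarrow> \<bar>x\<bar> \<le> d"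
    using integrable_powr_Ioo[of "\<alpha> - 1" d] \<alpha> d by (auto simp: w_def indicator_def)
  have moment: "(\<integral>x. w x * x ^ n \<partial>lborel) = d powr (\<alpha> + n) / (\<alpha> + n)" for n :: nat
  proof -
    have "(\<lambda>x. w x * x ^ n) = (\<lambda>x. indicator {0<..<d} x * x powr (\<alpha> - 1 + n))"
      by (auto simp: w_def fun_eq_iff indicator_def powr_add powr_realpow)
    then show ?thesis using integral_powr_Ioo[of "\<alpha> - 1 + n" d] \<alpha> d by simp
  qed
  show "integrable lborel (\<lambda>x. indicator {0<..<d} x * x powr (\<alpha> - 1) * exp (\<gamma> * x))"
    using integrable_mult_exp[OF w(1,2) d w(3)] by (simp add: w_def)
  show "(\<lambda>n. \<gamma> ^ n / fact n * (d powr (\<alpha> + n) / (\<alpha> + n))) sums tilted_gamma_integral \<alpha> \<gamma> d"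
    using sums_integral_mult_exp[OF w(1,2) d w(3)]
    unfolding moment by (simp add: w_def tilted_gamma_integral_def)
qed

lemma tilted_beta_integral_sums:
  fixes \<alpha> \<gamma> c :: real
  assumes \<alpha>: "\<alpha> > 0" and c: "c > 0"
  shows "(\<lambda>m. \<gamma> ^ m / fact m * (c powr (2 * \<alpha> + n + m) * Beta (\<alpha> + n + 1) (\<alpha> + m)))
           sums tilted_beta_integral \<alpha> \<gamma> c n"
proof -
  define w where "w = (\<lambda>x. indicator {0<..<c} x * x powr (\<alpha> - 1) * (c - x) powr (\<alpha> + n))"
  have w: "integrable lborel w" "\<And>x. 0 \<le> w x" "\<And>x. w x \<noteq> 0 \<Longrightarrow> \<bar>x\<bar> \<le> c"
    using integrable_Beta_kernel_Ioo[of "\<alpha> - 1" "\<alpha> + n" c] \<alpha> c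
    by (auto simp: w_def indicator_def mult_ac)
  have moment: "(\<integral>x. w x * x ^ m \<partial>lborel) = c powr (2 * \<alpha> + n + m) * Beta (\<alpha> + n + 1) (\<alpha> + m)"
    for m :: nat
  proof -
    have "(\<lambda>x. w x * x ^ m) = (\<lambda>x. indicator {0<..<c} x * (x powr (\<alpha> - 1 + m) * (c - x) powr (\<alpha> + n)))"
      by (auto simp: w_def fun_eq_iff indicator_def powr_add powr_realpow)
    moreover have "\<alpha> - 1 + m + (\<alpha> + n) + 1 = 2 * \<alpha> + n + m" by simp
    ultimately show ?thesis
      using integral_Beta_kernel_Ioo[of "\<alpha> - 1 + m" "\<alpha> + n" c] \<alpha> c by (simp add: Beta_commute add_ac)
  qed
  show ?thesis
    using sums_integral_mult_exp[OF w(1,2) _ w(3), of \<gamma>] c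
    unfolding moment by (simp add: w_def tilted_beta_integral_def)
qed

lemma summable_abs_exp_coeffs_div:
  fixes \<alpha> :: real
  assumes "\<alpha> > 0" "R \<ge> 0"
  shows "summable (\<lambda>n. \<bar>\<gamma> ^ n / (fact n * (\<alpha> + n))\<bar> * R ^ n)"
proof (rule summable_comparison_test[OF _ summable_divide[OF summable_abs_exp_coeffs, of \<gamma> R \<alpha>]])
  have "\<bar>\<gamma> ^ n / (fact n * (\<alpha> + n))\<bar> \<le> \<bar>\<gamma> ^ n / fact n\<bar> / \<alpha>" for n :: nat
  proof -
    have "\<bar>\<gamma> ^ n / (fact n * (\<alpha> + n))\<bar> = \<bar>\<gamma> ^ n / fact n\<bar> / (\<alpha> + n)"
      using assms by (simp add: abs_mult)
    also have "\<dots> \<le> \<bar>\<gamma> ^ n / fact n\<bar> / \<alpha>"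
      using assms by (intro divide_left_mono) auto
    finally show ?thesis .
  qed
  then have "\<bar>\<gamma> ^ n / (fact n * (\<alpha> + n))\<bar> * R ^ n \<le> \<bar>\<gamma> ^ n / fact n\<bar> / \<alpha> * R ^ n" for n :: nat
    by (rule mult_right_mono) (use assms in simp)
  then show "\<exists>N. \<forall>n\<ge>N. norm (\<bar>\<gamma> ^ n / (fact n * (\<alpha> + n))\<bar> * R ^ n) \<le> \<bar>\<gamma> ^ n / fact n\<bar> * R ^ n / \<alpha>"
    using assms by auto
qed

lemma
  fixes \<alpha> \<gamma> c :: real
  assumes \<alpha>: "\<alpha> > 0" and c: "c > 0"
  shows integrable_tilted_gamma_convolution:
      "integrable lborel (\<lambda>x. indicator {0<..<c} x * x powr (\<alpha> - 1) * exp (\<gamma> * x)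
                                * tilted_gamma_integral \<alpha> \<gamma> (c - x))"
    and tilted_gamma_convolution_sums:
      "(\<lambda>n. \<gamma> ^ n / (fact n * (\<alpha> + n)) * tilted_beta_integral \<alpha> \<gamma> c n)
         sums tilted_gamma_convolution \<alpha> \<gamma> c"
proof -
  define w where "w = (\<lambda>x. indicator {0<..<c} x * x powr (\<alpha> - 1) * (c - x) powr \<alpha> * exp (\<gamma> * x))"
  define g where "g = (\<lambda>x. tilted_gamma_integral \<alpha> \<gamma> (c - x) / (c - x) powr \<alpha>)"
  have "integrable lborel (\<lambda>x. indicator {0<..<c} x * (x powr (\<alpha> - 1) * (c - x) powr \<alpha>) * exp (\<gamma> * x))"
    using integrable_Beta_kernel_Ioo[of "\<alpha> - 1" \<alpha> c] \<alpha> c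
    by (intro integrable_mult_exp[where R = c]) (auto simp: indicator_def)
  then have w: "integrable lborel w" "\<And>x. 0 \<le> w x" "\<And>x. w x \<noteq> 0 \<Longrightarrow> \<bar>c - x\<bar> \<le> c"
    by (auto simp: w_def indicator_def mult_ac)
  have g: "(\<lambda>n. \<gamma> ^ n / (fact n * (\<alpha> + n)) * (c - x) ^ n) sums g x" if "w x \<noteq> 0" for x
  proof -
    define d where "d = c - x"
    have d: "d > 0" using that by (auto simp: w_def d_def indicator_def split: if_splits)
    have "\<gamma> ^ n / fact n * (d powr (\<alpha> + n) / (\<alpha> + n)) / d powr \<alpha> = \<gamma> ^ n / (fact n * (\<alpha> + n)) * d ^ n"
      for n :: nat
    proof -
      have "d powr (\<alpha> + n) = d ^ n * d powr \<alpha>" using d by (simp add: powr_add powr_realpow)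
      then show ?thesis using d by simp
    qed
    then show ?thesis
      using sums_divide[OF tilted_gamma_integral_sums[OF \<alpha> less_imp_le[OF d]], of \<gamma> "d powr \<alpha>"]
      by (simp add: g_def d_def)
  qed
  have moment: "(\<integral>x. w x * (c - x) ^ n \<partial>lborel) = tilted_beta_integral \<alpha> \<gamma> c n" for n :: nat
  proof -
    have "(\<lambda>x. w x * (c - x) ^ n) =
        (\<lambda>x. indicator {0<..<c} x * x powr (\<alpha> - 1) * (c - x) powr (\<alpha> + n) * exp (\<gamma> * x))"
      by (auto simp: w_def fun_eq_iff indicator_def powr_add powr_realpow)
    then show ?thesis by (simp add: tilted_beta_integral_def)
  qed
  have wg: "(\<lambda>x. w x * g x) = (\<lambda>x. indicator {0<..<c} x * x powr (\<alpha> - 1) * exp (\<gamma> * x)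
                                   * tilted_gamma_integral \<alpha> \<gamma> (c - x))"
    by (auto simp: w_def g_def fun_eq_iff indicator_def)
  have shift: "(\<lambda>x. c - x) \<in> borel_measurable borel" by measurable
  note series = w(1,2) shift less_imp_le[OF c] w(3) summable_abs_exp_coeffs_div[OF \<alpha> less_imp_le[OF c]] g
  show "integrable lborel (\<lambda>x. indicator {0<..<c} x * x powr (\<alpha> - 1) * exp (\<gamma> * x)
                               * tilted_gamma_integral \<alpha> \<gamma> (c - x))"
    using integrable_weighted_power_series[OF series] unfolding wg by simp
  show "(\<lambda>n. \<gamma> ^ n / (fact n * (\<alpha> + n)) * tilted_beta_integral \<alpha> \<gamma> c n)
          sums tilted_gamma_convolution \<alpha> \<gamma> c"
    using sums_integral_weighted_power_series[OF series] unfolding wg moment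
    by (simp add: tilted_gamma_convolution_def)
qed

lemma tilted_gamma_convolution_double_series:
  fixes \<alpha> c \<gamma> \<delta> e :: real
  assumes \<alpha>: "\<alpha> > 0" and c: "c > 0"
  shows "(\<Sum>n. \<Sum>m. c powr (2 * \<alpha> + n + m) / (fact n * fact m * (\<alpha> + n))
             * Beta (\<alpha> + n + 1) (\<alpha> + m) * (\<gamma> ^ (n + m) - e * \<delta> ^ (n + m)))
       = tilted_gamma_convolution \<alpha> \<gamma> c - e * tilted_gamma_convolution \<alpha> \<delta> c"
proof -
  define t where "t \<eta> n m = c powr (2 * \<alpha> + n + m) / (fact n * fact m * (\<alpha> + n))
                              * Beta (\<alpha> + n + 1) (\<alpha> + m) * \<eta> ^ (n + m)" for \<eta> :: real and n m :: nat
  define s where "s \<eta> n = \<eta> ^ n / (fact n * (\<alpha> + n)) * tilted_beta_integral \<alpha> \<eta> c n" for \<eta> :: real and n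
  have inner: "(\<lambda>m. t \<eta> n m) sums s \<eta> n" for \<eta> n
  proof -
    have "\<eta> ^ n / (fact n * (\<alpha> + n))
            * (\<eta> ^ m / fact m * (c powr (2 * \<alpha> + n + m) * Beta (\<alpha> + n + 1) (\<alpha> + m)))
          = t \<eta> n m" for m
      using \<alpha> by (simp add: t_def power_add field_simps)
    then show ?thesis
      using sums_mult[OF tilted_beta_integral_sums[OF \<alpha> c], of "\<eta> ^ n / (fact n * (\<alpha> + n))" \<eta> n]
      by (simp add: s_def)
  qed
  have "(\<lambda>m. t \<gamma> n m - e * t \<delta> n m) = (\<lambda>m. c powr (2 * \<alpha> + n + m) / (fact n * fact m * (\<alpha> + n))
          * Beta (\<alpha> + n + 1) (\<alpha> + m) * (\<gamma> ^ (n + m) - e * \<delta> ^ (n + m)))" for n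
    by (simp add: t_def fun_eq_iff diff_divide_distrib algebra_simps)
  moreover have "(\<lambda>m. t \<gamma> n m - e * t \<delta> n m) sums (s \<gamma> n - e * s \<delta> n)" for n
    by (intro sums_diff sums_mult inner)
  moreover have "(\<lambda>n. s \<gamma> n - e * s \<delta> n) sums
      (tilted_gamma_convolution \<alpha> \<gamma> c - e * tilted_gamma_convolution \<alpha> \<delta> c)"
    unfolding s_def by (intro sums_diff sums_mult tilted_gamma_convolution_sums[OF \<alpha> c])
  ultimately show ?thesis by (simp add: sums_iff)
qed

definition tilted_gamma_kernel :: "real \<Rightarrow> real \<Rightarrow> real \<Rightarrow> real \<Rightarrow> real \<Rightarrow> real" where
  "tilted_gamma_kernel \<alpha> c \<gamma> x y =
     indicator {0<..<c} x * x powr (\<alpha> - 1) * exp (\<gamma> * x) *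
     (indicator {0<..<c - x} y * y powr (\<alpha> - 1) * exp (\<gamma> * y))"

lemma gamma_density_mult_erlang_CDF:
  "gamma_density \<alpha> \<beta> x * gamma_density \<alpha> \<beta> y * erlang_CDF 0 \<rho> (c - x - y)
   = (\<beta> powr \<alpha> / Gamma \<alpha>)\<^sup>2 *
       (tilted_gamma_kernel \<alpha> c (- \<beta>) x y - exp (- \<rho> * c) * tilted_gamma_kernel \<alpha> c (\<rho> - \<beta>) x y)"
proof (cases "x > 0 \<and> y > 0 \<and> x + y < c")
  case True
  have tilt: "exp ((\<rho> - \<beta>) * t) = exp (\<rho> * t) * exp (- \<beta> * t)" for t
    by (simp add: exp_add[symmetric] algebra_simps)
  have tail: "exp (- \<rho> * (c - x - y)) = exp (- \<rho> * c) * exp (\<rho> * x) * exp (\<rho> * y)"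
    by (simp add: exp_add[symmetric] algebra_simps)
  show ?thesis
    using True unfolding tilted_gamma_kernel_def gamma_density_def erlang_CDF_0 tilt tail
    by (simp add: algebra_simps power2_eq_square diff_divide_distrib)
next
  case False
  then have "tilted_gamma_kernel \<alpha> c \<gamma> x y = 0" for \<gamma>
    by (auto simp: tilted_gamma_kernel_def)
  moreover have "gamma_density \<alpha> \<beta> x * gamma_density \<alpha> \<beta> y * erlang_CDF 0 \<rho> (c - x - y) = 0"
    using False by (auto simp: gamma_density_def erlang_CDF_0)
  ultimately show ?thesis by simp
qed

lemma
  fixes \<alpha> c \<gamma> x :: real
  assumes \<alpha>: "\<alpha> > 0"
  shows integrable_tilted_gamma_kernel: "integrable lborel (tilted_gamma_kernel \<alpha> c \<gamma> x)"
    and integral_tilted_gamma_kernel: "(\<integral>y. tilted_gamma_kernel \<alpha> c \<gamma> x y \<partial>lborel)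
          = indicator {0<..<c} x * x powr (\<alpha> - 1) * exp (\<gamma> * x) * tilted_gamma_integral \<alpha> \<gamma> (c - x)"
proof -
  have kernel: "tilted_gamma_kernel \<alpha> c \<gamma> x = (\<lambda>y. indicator {0<..<c} x * x powr (\<alpha> - 1) * exp (\<gamma> * x)
                   * (indicator {0<..<c - x} y * y powr (\<alpha> - 1) * exp (\<gamma> * y)))"
    by (simp add: tilted_gamma_kernel_def fun_eq_iff)
  show "integrable lborel (tilted_gamma_kernel \<alpha> c \<gamma> x)"
    unfolding kernel using integrable_tilted_gamma[OF \<alpha>, of "c - x" \<gamma>]
    by (cases "x \<in> {0<..<c}") simp_all
  show "(\<integral>y. tilted_gamma_kernel \<alpha> c \<gamma> x y \<partial>lborel)
          = indicator {0<..<c} x * x powr (\<alpha> - 1) * exp (\<gamma> * x) * tilted_gamma_integral \<alpha> \<gamma> (c - x)"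
    unfolding kernel tilted_gamma_integral_def by simp
qed

lemma tilted_gamma_convolution_nonpos: "c \<le> 0 \<Longrightarrow> tilted_gamma_convolution \<alpha> \<gamma> c = 0"
  by (simp add: tilted_gamma_convolution_def)

lemma
  fixes \<alpha> \<beta> \<rho> c :: real
  assumes \<alpha>: "\<alpha> > 0" and \<rho>: "\<rho> > 0"
  shows nn_integral_gamma_gamma_erlang_CDF:
      "(\<integral>\<^sup>+x. \<integral>\<^sup>+y. ennreal (gamma_density \<alpha> \<beta> x) * ennreal (gamma_density \<alpha> \<beta> y)
                    * ennreal (erlang_CDF 0 \<rho> (c - x - y)) \<partial>lborel \<partial>lborel)
       = ennreal ((\<beta> powr \<alpha> / Gamma \<alpha>)\<^sup>2 * (tilted_gamma_convolution \<alpha> (- \<beta>) c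
                    - exp (- \<rho> * c) * tilted_gamma_convolution \<alpha> (\<rho> - \<beta>) c))"
    and gamma_gamma_erlang_CDF_integral_nonneg:
      "0 \<le> (\<beta> powr \<alpha> / Gamma \<alpha>)\<^sup>2 * (tilted_gamma_convolution \<alpha> (- \<beta>) c
                    - exp (- \<rho> * c) * tilted_gamma_convolution \<alpha> (\<rho> - \<beta>) c)"
proof -
  define K where "K = (\<beta> powr \<alpha> / Gamma \<alpha>)\<^sup>2"
  define e where "e = exp (- \<rho> * c)"
  define W where "W = (\<lambda>x y. K * (tilted_gamma_kernel \<alpha> c (- \<beta>) x y
                                       - e * tilted_gamma_kernel \<alpha> c (\<rho> - \<beta>) x y))"
  define V where "V = (\<lambda>\<gamma> x. indicator {0<..<c} x * x powr (\<alpha> - 1) * exp (\<gamma> * x)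
                               * tilted_gamma_integral \<alpha> \<gamma> (c - x))"
  define F where "F = (\<lambda>x. K * (V (- \<beta>) x - e * V (\<rho> - \<beta>) x))"
  have gamma_density_nonneg: "0 \<le> gamma_density \<alpha> \<beta> t" for t
    using \<alpha> by (simp add: gamma_density_def)
  have W_eq: "gamma_density \<alpha> \<beta> x * gamma_density \<alpha> \<beta> y * erlang_CDF 0 \<rho> (c - x - y) = W x y" for x y
    using gamma_density_mult_erlang_CDF[of \<alpha> \<beta> x y \<rho> c] by (simp add: W_def K_def e_def)
  have W_nonneg: "0 \<le> W x y" for x y
    unfolding W_eq[symmetric] using gamma_density_nonneg erlang_CDF_nonneg[OF \<rho>] by simp
  have integrand: "ennreal (gamma_density \<alpha> \<beta> x) * ennreal (gamma_density \<alpha> \<beta> y)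
                    * ennreal (erlang_CDF 0 \<rho> (c - x - y)) = ennreal (W x y)" for x y
    unfolding W_eq[symmetric] using gamma_density_nonneg erlang_CDF_nonneg[OF \<rho>]
    by (simp add: ennreal_mult[symmetric])
  have W: "integrable lborel (W x)" "integral\<^sup>L lborel (W x) = F x" for x
    using integrable_tilted_gamma_kernel[OF \<alpha>] integral_tilted_gamma_kernel[OF \<alpha>]
    by (simp_all add: W_def F_def V_def)
  have F_nonneg: "0 \<le> F x" for x
    using integral_nonneg_AE[of "W x" lborel] W_nonneg W(2) by simp
  have V: "integrable lborel (V \<gamma>)" for \<gamma>
    using integrable_tilted_gamma_convolution[OF \<alpha>, of c \<gamma>] by (cases "c > 0") (simp_all add: V_def)
  have integral_V: "integral\<^sup>L lborel (V \<gamma>) = tilted_gamma_convolution \<alpha> \<gamma> c" for \<gamma>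
    by (simp add: V_def tilted_gamma_convolution_def)
  have "(\<integral>\<^sup>+x. \<integral>\<^sup>+y. ennreal (W x y) \<partial>lborel \<partial>lborel) = (\<integral>\<^sup>+x. ennreal (F x) \<partial>lborel)"
    using nn_integral_eq_integral[OF W(1)] W(2) W_nonneg by (intro nn_integral_cong) simp
  also have "\<dots> = ennreal (integral\<^sup>L lborel F)"
    using V F_nonneg by (intro nn_integral_eq_integral) (simp_all add: F_def)
  also have "integral\<^sup>L lborel F
      = K * (tilted_gamma_convolution \<alpha> (- \<beta>) c - e * tilted_gamma_convolution \<alpha> (\<rho> - \<beta>) c)"
    using V by (simp add: F_def integral_V)
  finally show "(\<integral>\<^sup>+x. \<integral>\<^sup>+y. ennreal (gamma_density \<alpha> \<beta> x) * ennreal (gamma_density \<alpha> \<beta> y)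
                    * ennreal (erlang_CDF 0 \<rho> (c - x - y)) \<partial>lborel \<partial>lborel)
       = ennreal ((\<beta> powr \<alpha> / Gamma \<alpha>)\<^sup>2 * (tilted_gamma_convolution \<alpha> (- \<beta>) c
                    - exp (- \<rho> * c) * tilted_gamma_convolution \<alpha> (\<rho> - \<beta>) c))"
    by (simp add: integrand K_def e_def)
  show "0 \<le> (\<beta> powr \<alpha> / Gamma \<alpha>)\<^sup>2 * (tilted_gamma_convolution \<alpha> (- \<beta>) c
                    - exp (- \<rho> * c) * tilted_gamma_convolution \<alpha> (\<rho> - \<beta>) c)"
    using integral_nonneg_AE[of F lborel] F_nonneg V by (simp add: F_def K_def e_def integral_V)
qed

lemma tilted_gamma_convolution_diff_series:
  fixes \<alpha> \<beta> \<rho> c :: real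
  assumes \<alpha>: "\<alpha> > 0" and \<beta>: "\<beta> > 0"
  shows "(\<beta> powr \<alpha> / Gamma \<alpha>)\<^sup>2 * (tilted_gamma_convolution \<alpha> (- \<beta>) c
                               - exp (- \<rho> * c) * tilted_gamma_convolution \<alpha> (\<rho> - \<beta>) c)
    = \<beta> powr (2 * \<alpha>) / (Gamma \<alpha>)\<^sup>2 *
        (\<Sum>n. \<Sum>m. max 0 c powr (2 * \<alpha> + real n + real m) / (fact n * fact m * (\<alpha> + real n))
             * Beta (\<alpha> + real n + 1) (\<alpha> + real m)
             * ((- \<beta>) ^ (n + m) - exp (- \<rho> * max 0 c) * (\<rho> - \<beta>) ^ (n + m)))"
proof -
  have "(\<beta> powr \<alpha>)\<^sup>2 = \<beta> powr (2 * \<alpha>)"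
    using powr_realpow[of "\<beta> powr \<alpha>" 2] powr_powr[of \<beta> \<alpha> 2] \<beta> by (simp add: mult.commute)
  then have rate_factor: "\<beta> powr (2 * \<alpha>) / (Gamma \<alpha>)\<^sup>2 = (\<beta> powr \<alpha> / Gamma \<alpha>)\<^sup>2"
    by (simp add: power_divide)
  show ?thesis
  proof (cases "c > 0")
    case True
    then show ?thesis
      using tilted_gamma_convolution_double_series[OF \<alpha> True, of "- \<beta>" "exp (- \<rho> * c)" "\<rho> - \<beta>"]
      by (simp add: rate_factor)
  qed (simp add: tilted_gamma_convolution_nonpos)
qed

lemma nn_integral_exponential_density_lessThan:
  assumes "\<rho> > 0"
  shows "(\<integral>\<^sup>+t. ennreal (exponential_density \<rho> t) * indicator {..<a} t \<partial>lborel) = erlang_CDF 0 \<rho> a"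
proof -
  have "(\<integral>\<^sup>+t. ennreal (exponential_density \<rho> t) * indicator {..<a} t \<partial>lborel)
      = (\<integral>\<^sup>+t. ennreal (exponential_density \<rho> t) * indicator {..a} t \<partial>lborel)"
    by (intro nn_integral_cong_AE eventually_mono[OF AE_lborel_singleton[of a]])
       (auto simp: indicator_def)
  then show ?thesis using nn_integral_erlang_density[OF assms, of 0 a] by simp
qed

context prob_space
begin

lemma emeasure_add_exponential_less:
  assumes S[measurable]: "S \<in> borel_measurable M" and \<rho>: "\<rho> > 0"
    and T: "distributed M lborel T (\<lambda>x. ennreal (exponential_density \<rho> x))"
    and indep: "indep_var lborel S lborel T"
  shows "emeasure M {\<omega> \<in> space M. S \<omega> + T \<omega> < c} = (\<integral>\<^sup>+\<omega>. erlang_CDF 0 \<rho> (c - S \<omega>) \<partial>M)"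
proof -
  have [measurable]: "T \<in> borel_measurable M" using distributed_measurable[OF T] by simp
  interpret T: prob_space "distr M lborel T" by (rule prob_space_distr) simp
  define B where "B = {p \<in> space (lborel \<Otimes>\<^sub>M lborel). fst p + snd p < (c::real)}"
  have B_sets: "B \<in> sets (lborel \<Otimes>\<^sub>M lborel)" unfolding B_def by measurable
  have "sets (distr M lborel S \<Otimes>\<^sub>M distr M lborel T) = sets (lborel \<Otimes>\<^sub>M lborel)"
    by (rule sets_pair_measure_cong) simp_all
  with B_sets have B: "B \<in> sets (distr M lborel S \<Otimes>\<^sub>M distr M lborel T)" by simp
  have slice: "emeasure (distr M lborel T) (Pair s -` B) = erlang_CDF 0 \<rho> (c - s)" for s
  proof -
    have "Pair s -` B = {..<c - s}" by (auto simp: B_def space_pair_measure)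
    then show ?thesis
      using nn_integral_exponential_density_lessThan[OF \<rho>, of "c - s"]
      by (simp add: distributed_distr_eq_density[OF T] emeasure_density)
  qed
  have "emeasure M {\<omega> \<in> space M. S \<omega> + T \<omega> < c}
      = emeasure (distr M (lborel \<Otimes>\<^sub>M lborel) (\<lambda>\<omega>. (S \<omega>, T \<omega>))) B"
    using B_sets by (subst emeasure_distr)
      (auto simp: B_def space_pair_measure intro!: arg_cong[where f="emeasure M"])
  also have "\<dots> = emeasure (distr M lborel S \<Otimes>\<^sub>M distr M lborel T) B"
    using indep unfolding indep_var_distribution_eq by simp
  also have "\<dots> = (\<integral>\<^sup>+s. erlang_CDF 0 \<rho> (c - s) \<partial>distr M lborel S)"
    using T.emeasure_pair_measure_alt[OF B] by (simp add: slice)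
  also have "\<dots> = (\<integral>\<^sup>+\<omega>. erlang_CDF 0 \<rho> (c - S \<omega>) \<partial>M)"
    by (rule nn_integral_distr) (simp_all add: erlang_CDF_def)
  finally show ?thesis .
qed

lemma nn_integral_indep_densities:
  assumes X: "distributed M lborel X f" and Y: "distributed M lborel Y g"
    and indep: "indep_var lborel X lborel Y"
    and h[measurable]: "h \<in> borel_measurable (lborel \<Otimes>\<^sub>M lborel)"
  shows "(\<integral>\<^sup>+\<omega>. h (X \<omega>, Y \<omega>) \<partial>M) = (\<integral>\<^sup>+x. \<integral>\<^sup>+y. f x * g y * h (x, y) \<partial>lborel \<partial>lborel)"
proof -
  have XY: "distributed M (lborel \<Otimes>\<^sub>M lborel) (\<lambda>\<omega>. (X \<omega>, Y \<omega>)) (\<lambda>(x, y). f x * g y)"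
    by (rule distributed_joint_indep[OF lborel.sigma_finite_measure_axioms
          lborel.sigma_finite_measure_axioms X Y indep])
  have [measurable]: "f \<in> borel_measurable borel" "g \<in> borel_measurable borel"
    using distributed_borel_measurable[OF X] distributed_borel_measurable[OF Y] by simp_all
  have "(\<integral>\<^sup>+\<omega>. h (X \<omega>, Y \<omega>) \<partial>M) = (\<integral>\<^sup>+p. h p \<partial>distr M (lborel \<Otimes>\<^sub>M lborel) (\<lambda>\<omega>. (X \<omega>, Y \<omega>)))"
    using distributed_measurable[OF XY] by (simp add: nn_integral_distr)
  also have "\<dots> = (\<integral>\<^sup>+p. f (fst p) * g (snd p) * h p \<partial>(lborel \<Otimes>\<^sub>M lborel))"
    unfolding distributed_distr_eq_density[OF XY]
    by (subst nn_integral_density) (simp_all add: split_beta)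
  also have "\<dots> = (\<integral>\<^sup>+x. \<integral>\<^sup>+y. f x * g y * h (x, y) \<partial>lborel \<partial>lborel)"
    by (subst lborel.nn_integral_fst[symmetric]) simp_all
  finally show ?thesis .
qed

lemma indep_var_of_indep_vars:
  fixes Y :: "'i \<Rightarrow> 'a \<Rightarrow> real"
  assumes Y: "indep_vars (\<lambda>_. borel) Y I" and "i \<in> I" "j \<in> I" "i \<noteq> j"
  shows "indep_var lborel (Y i) lborel (Y j)"
proof -
  have "indep_var lborel ((\<lambda>f. f i) \<circ> (\<lambda>\<omega>. restrict (\<lambda>i. Y i \<omega>) {i}))
                   lborel ((\<lambda>f. f j) \<circ> (\<lambda>\<omega>. restrict (\<lambda>i. Y i \<omega>) {j}))"
    by (rule indep_var_compose[OF indep_var_restrict[OF Y]]) (use assms in auto)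
  then show ?thesis by (simp add: comp_def)
qed

lemma indep_var_add_of_indep_vars:
  fixes Y :: "'i \<Rightarrow> 'a \<Rightarrow> real"
  assumes Y: "indep_vars (\<lambda>_. borel) Y I" and "i \<in> I" "j \<in> I" "l \<in> I" "l \<noteq> i" "l \<noteq> j"
  shows "indep_var lborel (\<lambda>\<omega>. Y i \<omega> + Y j \<omega>) lborel (Y l)"
proof -
  have "indep_var lborel ((\<lambda>f. f i + f j) \<circ> (\<lambda>\<omega>. restrict (\<lambda>i. Y i \<omega>) {i, j}))
                   lborel ((\<lambda>f. f l) \<circ> (\<lambda>\<omega>. restrict (\<lambda>i. Y i \<omega>) {l}))"
    by (rule indep_var_compose[OF indep_var_restrict[OF Y]]) (use assms in auto)
  then show ?thesis by (simp add: comp_def)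
qed

lemma prob_add_gamma_gamma_exponential_less:
  fixes X\<^sub>1 X\<^sub>2 T :: "'a \<Rightarrow> real"
  assumes \<alpha>: "\<alpha> > 0" and \<rho>: "\<rho> > 0"
    and X\<^sub>1: "distributed M lborel X\<^sub>1 (\<lambda>x. ennreal (gamma_density \<alpha> \<beta> x))"
    and X\<^sub>2: "distributed M lborel X\<^sub>2 (\<lambda>x. ennreal (gamma_density \<alpha> \<beta> x))"
    and T: "distributed M lborel T (\<lambda>x. ennreal (exponential_density \<rho> x))"
    and indep_X: "indep_var lborel X\<^sub>1 lborel X\<^sub>2"
    and indep_T: "indep_var lborel (\<lambda>\<omega>. X\<^sub>1 \<omega> + X\<^sub>2 \<omega>) lborel T"
  shows "prob {\<omega> \<in> space M. X\<^sub>1 \<omega> + X\<^sub>2 \<omega> + T \<omega> < c} =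
    (\<beta> powr \<alpha> / Gamma \<alpha>)\<^sup>2 * (tilted_gamma_convolution \<alpha> (- \<beta>) c
                               - exp (- \<rho> * c) * tilted_gamma_convolution \<alpha> (\<rho> - \<beta>) c)"
proof -
  have [measurable]: "X\<^sub>1 \<in> borel_measurable M" "X\<^sub>2 \<in> borel_measurable M"
    using distributed_measurable[OF X\<^sub>1] distributed_measurable[OF X\<^sub>2] by simp_all
  have "emeasure M {\<omega> \<in> space M. X\<^sub>1 \<omega> + X\<^sub>2 \<omega> + T \<omega> < c}
      = (\<integral>\<^sup>+\<omega>. erlang_CDF 0 \<rho> (c - (X\<^sub>1 \<omega> + X\<^sub>2 \<omega>)) \<partial>M)"
    using emeasure_add_exponential_less[OF _ \<rho> T indep_T] by simp
  also have "\<dots> = (\<integral>\<^sup>+x. \<integral>\<^sup>+y. ennreal (gamma_density \<alpha> \<beta> x) * ennreal (gamma_density \<alpha> \<beta> y)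
                    * ennreal (erlang_CDF 0 \<rho> (c - x - y)) \<partial>lborel \<partial>lborel)"
    using nn_integral_indep_densities[OF X\<^sub>1 X\<^sub>2 indep_X,
        of "\<lambda>(x, y). ennreal (erlang_CDF 0 \<rho> (c - x - y))"]
    by (simp add: diff_diff_eq erlang_CDF_def)
  finally show ?thesis
    using nn_integral_gamma_gamma_erlang_CDF[OF \<alpha> \<rho>] gamma_gamma_erlang_CDF_integral_nonneg[OF \<alpha> \<rho>]
    by (simp add: emeasure_eq_measure)
qed

end

theorem lemma2:
  fixes M :: "'s measure"
    and X :: "nat \<Rightarrow> 's \<Rightarrow> real"
    and Tint :: "nat \<Rightarrow> 's \<Rightarrow> real"
    and \<alpha> \<beta> \<rho> Ttx v :: real
    and k :: nat
  assumes "prob_space M"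
    and "\<alpha> > 0" and "\<beta> > 0" and "\<rho> > 0" and "Ttx \<ge> 0"
    and "\<And>n. distributed M lborel (X n) (\<lambda>x. ennreal (gamma_density \<alpha> \<beta> x))"
    and "\<And>n. n \<ge> 1 \<Longrightarrow> distributed M lborel (Tint n) (\<lambda>x. ennreal (exponential_density \<rho> x))"
    and "prob_space.indep_vars M (\<lambda>_. borel)
           (\<lambda>i. case i of Inl n \<Rightarrow> X n | Inr n \<Rightarrow> Tint n) (range Inl \<union> Inr ` {1..})"
    and "k \<ge> 1"
    and "v \<ge> 0"
  shows "measure M {\<omega> \<in> space M. X (k - 1) \<omega> + X k \<omega> + Tint k \<omega> + Ttx \<ge> v} =
    (let Tv = max 0 (v - Ttx) in
      1 - \<beta> powr (2 * \<alpha>) / (Gamma \<alpha>)\<^sup>2 *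
        (\<Sum>n. \<Sum>m. Tv powr (2 * \<alpha> + real n + real m) / (fact n * fact m * (\<alpha> + real n))
             * Beta (\<alpha> + real n + 1) (\<alpha> + real m)
             * ((- \<beta>) ^ (n + m) - exp (- \<rho> * Tv) * (\<rho> - \<beta>) ^ (n + m))))"
proof -
  interpret prob_space M by fact
  have indep_X: "indep_var lborel (X (k - 1)) lborel (X k)"
    using indep_var_of_indep_vars[OF assms(8), of "Inl (k - 1)" "Inl k"] \<open>k \<ge> 1\<close> by simp
  have indep_T: "indep_var lborel (\<lambda>\<omega>. X (k - 1) \<omega> + X k \<omega>) lborel (Tint k)"
    using indep_var_add_of_indep_vars[OF assms(8), of "Inl (k - 1)" "Inl k" "Inr k"] \<open>k \<ge> 1\<close> by simp
  define c where "c = v - Ttx"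
  have [measurable]:
      "X (k - 1) \<in> borel_measurable M" "X k \<in> borel_measurable M" "Tint k \<in> borel_measurable M"
    using distributed_measurable[OF assms(6)] distributed_measurable[OF assms(7)[OF \<open>k \<ge> 1\<close>]]
    by simp_all
  define E where "E = {\<omega> \<in> space M. X (k - 1) \<omega> + X k \<omega> + Tint k \<omega> < c}"
  have "E \<in> events" unfolding E_def by measurable
  moreover have "{\<omega> \<in> space M. X (k - 1) \<omega> + X k \<omega> + Tint k \<omega> + Ttx \<ge> v} = space M - E"
    by (auto simp: E_def c_def)
  ultimately have "measure M {\<omega> \<in> space M. X (k - 1) \<omega> + X k \<omega> + Tint k \<omega> + Ttx \<ge> v} = 1 - prob E"
    by (simp add: prob_compl)
  also have "\<dots> = 1 - (\<beta> powr \<alpha> / Gamma \<alpha>)\<^sup>2 * (tilted_gamma_convolution \<alpha> (- \<beta>) c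
                               - exp (- \<rho> * c) * tilted_gamma_convolution \<alpha> (\<rho> - \<beta>) c)"
    unfolding E_def
    by (rule arg_cong[OF prob_add_gamma_gamma_exponential_less[OF assms(2,4,6,6)
          assms(7)[OF \<open>k \<ge> 1\<close>] indep_X indep_T]])
  finally show ?thesis
    unfolding Let_def c_def using tilted_gamma_convolution_diff_series[OF assms(2,3)] by simp
qed

end
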